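(* For all integers $p,q\geq 3$, $\mathrm{mbt}(K_p\Box C_q)=\Delta(K_p\Box C_q)+1$, where $K_p$ is the complete graph on $p$ vertices and $C_q$ is the cycle on $q$ vertices.
   Context: A book embedding of a graph $G$ consists of a linear ordering of $V(G)$ (the vertices placed on the spine) together with an assignment of each edge to one of a set of pages such that no two edges on the same page cross, i.e. there are no two edges $uv$, $xy$ on the same page with $u<x<v<y$ in the ordering. A book embedding is matching if on every page each vertex is incident with at most one edge of that page (the edges of each page form a matching). The matching book thickness $\mathrm{mbt}(G)$ is the minimum number of pages over all matching book embeddings of $G$. $\Delta(G)$ denotes the maximum degree of $G$. The Cartesian product $G\Box B$ has vertex set $V(G)\times V(B)$, with $(u_1,v_1)$ adjacent to $(u_2,v_2)$ iff either $u_1=u_2$ and $v_1v_2\in E(B)$, or $v_1=v_2$ and $u_1u_2\in E(G)$. *)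

theory Defs
  imports Main
begin

type_synonym 'a graph = "'a set \<times> 'a set set"

definition verts :: "'a graph \<Rightarrow> 'a set" where "verts G = fst G"
definition edges :: "'a graph \<Rightarrow> 'a set set" where "edges G = snd G"

definition simple_graph :: "'a graph \<Rightarrow> bool" where
  "simple_graph G \<longleftrightarrow> finite (verts G) \<and>
     (\<forall>e\<in>edges G. e \<subseteq> verts G \<and> card e = 2)"

definition degree :: "'a graph \<Rightarrow> 'a \<Rightarrow> nat" where
  "degree G v = card {e \<in> edges G. v \<in> e}"

definition max_degree :: "'a graph \<Rightarrow> nat" where
  "max_degree G = Max (degree G ` verts G)"

definition crossing :: "('a \<Rightarrow> nat) \<Rightarrow> 'a set \<Rightarrow> 'a set \<Rightarrow> bool" where
  "crossing ord e f \<longleftrightarrow> (\<exists>u v x y. e = {u, v} \<and> f = {x, y} \<and>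
      ord u < ord x \<and> ord x < ord v \<and> ord v < ord y)"

definition matching_book_embedding ::
    "'a graph \<Rightarrow> nat \<Rightarrow> ('a \<Rightarrow> nat) \<Rightarrow> ('a set \<Rightarrow> nat) \<Rightarrow> bool" where
  "matching_book_embedding G k ord page \<longleftrightarrow>
     inj_on ord (verts G) \<and>
     (\<forall>e\<in>edges G. page e < k) \<and>
     (\<forall>e\<in>edges G. \<forall>f\<in>edges G. page e = page f \<longrightarrow> \<not> crossing ord e f) \<and>
     (\<forall>e\<in>edges G. \<forall>f\<in>edges G. page e = page f \<longrightarrow> e \<noteq> f \<longrightarrow> e \<inter> f = {})"

definition mbt :: "'a graph \<Rightarrow> nat" where
  "mbt G = (LEAST k. \<exists>ord page. matching_book_embedding G k ord page)"

definition complete_graph :: "nat \<Rightarrow> nat graph" where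
  "complete_graph p = ({0..<p}, {{i, j} | i j. i < p \<and> j < p \<and> i \<noteq> j})"

definition cycle_graph :: "nat \<Rightarrow> nat graph" where
  "cycle_graph q = ({0..<q}, {{i, (i + 1) mod q} | i. i < q})"

definition cart_prod :: "'a graph \<Rightarrow> 'b graph \<Rightarrow> ('a \<times> 'b) graph" where
  "cart_prod G B = (verts G \<times> verts B,
     {{(u, v1), (u, v2)} | u v1 v2. u \<in> verts G \<and> {v1, v2} \<in> edges B} \<union>
     {{(u1, v), (u2, v)} | u1 u2 v. v \<in> verts B \<and> {u1, u2} \<in> edges G})"

end

theory Submission
  imports Defs
begin

text \<open>
  If a matching book embedding has at most as many pages as the minimum degree,
  the edges at a vertex get pairwise distinct pages, so every page is present at every vertex.
  For an edge ab the vertices strictly between a and b on the spine are then perfectly matched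
  by the page of ab, since these edges can neither cross ab nor share an end with it; hence
  there is an even number of them. A triangle x < y < z contradicts this: the vertices between
  x and z are those between x and y, then y, then those between y and z.

  The rows of K_p \<box> C_q are laid out consecutively, in alternating direction,
  so that the rungs between two consecutive rows are nested and fit on one page; two pages,
  alternating with the row, serve all rungs. In a row, the pairs \<open>{a, b}\<close> with
  \<open>a + b\<close> in a fixed residue class modulo p form a non-crossing matching. The
  first and last rows also meet the wrap-around edges of C_q; there residues modulo
  p + 1 are used, and the wrap edge at column u takes the one class that is absent at u.
\<close>

section \<open>Matching book embeddings with few pages\<close>

lemma simple_graph_edge_distinct: "simple_graph G \<Longrightarrow> {a, b} \<in> edges G \<Longrightarrow> a \<noteq> b"
  unfolding simple_graph_def by (metis card_2_iff doubleton_eq_iff)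

lemma simple_graph_edge_verts: "simple_graph G \<Longrightarrow> e \<in> edges G \<Longrightarrow> x \<in> e \<Longrightarrow> x \<in> verts G"
  unfolding simple_graph_def by blast

lemma matching_book_embedding_every_page_at_vertex:
  assumes G: "simple_graph G" and mbe: "matching_book_embedding G k ord page"
    and deg: "k \<le> degree G x" and i: "i < k"
  shows "\<exists>f\<in>edges G. x \<in> f \<and> page f = i"
proof -
  define I where "I = {e \<in> edges G. x \<in> e}"
  have "inj_on page I"
    using mbe unfolding inj_on_def I_def matching_book_embedding_def by blast
  then have "card (page ` I) = degree G x"
    unfolding degree_def I_def by (simp add: card_image)
  moreover have "page ` I \<subseteq> {..<k}"
    using mbe unfolding I_def matching_book_embedding_def by auto
  ultimately have "page ` I = {..<k}"
    using deg by (intro card_seteq) auto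
  then have "i \<in> page ` I"
    using i by simp
  then show ?thesis
    unfolding I_def by blast
qed

definition between :: "'a graph \<Rightarrow> ('a \<Rightarrow> nat) \<Rightarrow> 'a \<Rightarrow> 'a \<Rightarrow> 'a set" where
  "between G ord a b = {x \<in> verts G. ord a < ord x \<and> ord x < ord b}"

lemma even_card_between_if_every_page_at_vertex:
  assumes G: "simple_graph G" and mbe: "matching_book_embedding G k ord page"
    and full: "\<forall>x\<in>verts G. \<forall>i<k. \<exists>f\<in>edges G. x \<in> f \<and> page f = i"
    and ab: "{a, b} \<in> edges G" and ord_ab: "ord a < ord b"
  shows "even (card (between G ord a b))"
proof -
  define S where "S = between G ord a b"
  define M where "M = {f \<in> edges G. page f = page {a, b} \<and> f \<subseteq> S}"
  have inj: "inj_on ord (verts G)" and pages: "\<forall>e\<in>edges G. page e < k"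
    and no_cross: "\<forall>e\<in>edges G. \<forall>f\<in>edges G. page e = page f \<longrightarrow> \<not> crossing ord e f"
    and disj: "\<forall>e\<in>edges G. \<forall>f\<in>edges G. page e = page f \<longrightarrow> e \<noteq> f \<longrightarrow> e \<inter> f = {}"
    using mbe unfolding matching_book_embedding_def by auto
  have two: "\<forall>e\<in>edges G. card e = 2" and fin: "finite (verts G)"
    using G unfolding simple_graph_def by auto
  have "S \<subseteq> \<Union>M"
  proof
    fix x assume "x \<in> S"
    then have x: "x \<in> verts G" "ord a < ord x" "ord x < ord b"
      unfolding S_def between_def by auto
    obtain f where f: "f \<in> edges G" "x \<in> f" "page f = page {a, b}"
      using full x(1) pages ab by blast
    obtain y1 y2 where "f = {y1, y2}"
      using two f(1) card_2_iff by metis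
    then obtain y where fxy: "f = {x, y}"
      using f(2) by auto
    have y: "y \<in> verts G"
      using simple_graph_edge_verts[OF G f(1)] fxy by simp
    have "f \<noteq> {a, b}"
      using f(2) x(2,3) by auto
    then have "y \<noteq> a" "y \<noteq> b"
      using disj f(1,3) ab fxy by blast+
    moreover have "a \<in> verts G" "b \<in> verts G"
      using simple_graph_edge_verts[OF G ab] by auto
    ultimately have ne: "ord y \<noteq> ord a" "ord y \<noteq> ord b"
      using inj y by (metis inj_on_contraD)+
    have "\<not> crossing ord f {a, b}" "\<not> crossing ord {a, b} f"
      using no_cross f ab by auto
    then have "\<not> ord y < ord a" "\<not> ord b < ord y"
      unfolding crossing_def using fxy x by (metis insert_commute)+
    with ne y have "y \<in> S"
      unfolding S_def between_def by auto
    then show "x \<in> \<Union>M"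
      unfolding M_def using f fxy \<open>x \<in> S\<close> by auto
  qed
  then have "S = \<Union>M"
    unfolding M_def by auto
  moreover have "finite S"
    using fin unfolding S_def between_def by simp
  moreover have "M \<subseteq> Pow S" "pairwise disjnt M"
    unfolding M_def pairwise_def disjnt_def using disj by auto
  ultimately have "card S = sum card M"
    by (metis card_Union_disjoint PowD finite_subset subsetD)
  also have "\<dots> = 2 * card M"
    using two unfolding M_def by simp
  finally show ?thesis
    unfolding S_def by simp
qed

lemma no_ordered_triangle_if_every_page_at_vertex:
  assumes G: "simple_graph G" and mbe: "matching_book_embedding G k ord page"
    and full: "\<forall>x\<in>verts G. \<forall>i<k. \<exists>f\<in>edges G. x \<in> f \<and> page f = i"
    and xy: "{x, y} \<in> edges G" and yz: "{y, z} \<in> edges G" and xz: "{x, z} \<in> edges G"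
    and ord: "ord x < ord y" "ord y < ord z"
  shows False
proof -
  have y: "y \<in> verts G"
    using simple_graph_edge_verts[OF G xy] by simp
  have inj: "inj_on ord (verts G)"
    using mbe unfolding matching_book_embedding_def by simp
  have split: "between G ord x z = between G ord x y \<union> insert y (between G ord y z)"
    using ord y inj_on_contraD[OF inj _ y] unfolding between_def
    by (auto simp: simple_graph_def) (metis linorder_neqE_nat)
  have "finite (between G ord a b)" for a b
    using G unfolding between_def simple_graph_def by simp
  moreover have "between G ord x y \<inter> insert y (between G ord y z) = {}" "y \<notin> between G ord y z"
    unfolding between_def by auto
  ultimately have "card (between G ord x z) = card (between G ord x y) + Suc (card (between G ord y z))"
    unfolding split by (simp add: card_Un_disjoint)
  moreover have "even (card (between G ord x z))" "even (card (between G ord x y))"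
    "even (card (between G ord y z))"
    using even_card_between_if_every_page_at_vertex[OF G mbe full] xy yz xz ord
    by (meson less_trans)+
  ultimately show False
    by simp
qed

lemma matching_book_embedding_triangle_degree_less:
  assumes G: "simple_graph G" and mbe: "matching_book_embedding G k ord page"
    and xy: "{x, y} \<in> edges G" and yz: "{y, z} \<in> edges G" and xz: "{x, z} \<in> edges G"
  shows "\<exists>v\<in>verts G. degree G v < k"
proof (rule ccontr)
  assume "\<not> ?thesis"
  then have "\<forall>v\<in>verts G. \<forall>i<k. \<exists>f\<in>edges G. v \<in> f \<and> page f = i"
    using matching_book_embedding_every_page_at_vertex[OF G mbe] by (meson not_less)
  note no_triangle = no_ordered_triangle_if_every_page_at_vertex[OF G mbe this]
  define T where "T = {x, y, z}"
  have edge: "{a, b} \<in> edges G" if "a \<in> T" "b \<in> T" "a \<noteq> b" for a b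
    using that xy yz xz unfolding T_def by (auto simp: insert_commute)
  have ordered: False if "a \<in> T" "b \<in> T" "c \<in> T" "ord a < ord b" "ord b < ord c" for a b c
    using no_triangle[OF edge edge edge] that by (metis less_irrefl less_trans)
  have "x \<in> verts G" "y \<in> verts G" "z \<in> verts G"
    using simple_graph_edge_verts[OF G] xy yz by blast+
  moreover have "x \<noteq> y" "y \<noteq> z" "x \<noteq> z"
    using simple_graph_edge_distinct[OF G] xy yz xz by blast+
  moreover have "inj_on ord (verts G)"
    using mbe unfolding matching_book_embedding_def by simp
  ultimately have "ord x \<noteq> ord y" "ord y \<noteq> ord z" "ord x \<noteq> ord z"
    by (metis inj_on_contraD)+
  moreover have "x \<in> T" "y \<in> T" "z \<in> T"
    unfolding T_def by simp_all
  ultimately show False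
    using ordered by (metis linorder_neqE_nat)
qed

section \<open>The graph \<open>K\<^sub>p \<box> C\<^sub>q\<close>\<close>

lemma verts_complete_graph [simp]: "verts (complete_graph p) = {..<p}"
  unfolding verts_def complete_graph_def by auto

lemma verts_cycle_graph [simp]: "verts (cycle_graph q) = {..<q}"
  unfolding verts_def cycle_graph_def by auto

lemma edge_complete_graph_iff: "{u, u'} \<in> edges (complete_graph p) \<longleftrightarrow> u < p \<and> u' < p \<and> u \<noteq> u'"
  unfolding edges_def complete_graph_def by (auto simp: doubleton_eq_iff)

lemma edge_cycle_graph_iff:
  assumes "3 \<le> q"
  shows "{v, w} \<in> edges (cycle_graph q) \<longleftrightarrow> v < q \<and> w < q \<and>
    (w = Suc v \<or> v = Suc w \<or> (v = 0 \<and> w = q - 1) \<or> (w = 0 \<and> v = q - 1))"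
proof -
  have succ: "(i + 1) mod q = (if i = q - 1 then 0 else Suc i)" if "i < q" for i
    using that assms by auto
  have "{v, w} \<in> edges (cycle_graph q) \<longleftrightarrow> (\<exists>i<q. {v, w} = {i, (i + 1) mod q})"
    unfolding edges_def cycle_graph_def by auto
  also have "\<dots> \<longleftrightarrow> v < q \<and> w < q \<and>
    (w = Suc v \<or> v = Suc w \<or> (v = 0 \<and> w = q - 1) \<or> (w = 0 \<and> v = q - 1))"
    (is "?L \<longleftrightarrow> ?R")
  proof
    assume ?L
    then obtain i where "i < q" "{v, w} = {i, (i + 1) mod q}"
      by blast
    then show ?R
      using assms by (cases "i = q - 1") (auto simp: succ doubleton_eq_iff)
  next
    assume ?R
    then consider "w = Suc v" "w < q" | "v = Suc w" "v < q" | "v = 0" "w = q - 1" | "w = 0" "v = q - 1"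
      by blast
    then show ?L
    proof cases
      case 1
      then show ?thesis
        by (intro exI[of _ v]) auto
    next
      case 2
      then show ?thesis
        by (intro exI[of _ w]) (auto simp: insert_commute)
    next
      case 3
      then show ?thesis
        using succ[of "q - 1"] assms by (auto simp: insert_commute intro!: exI[of _ "q - 1"])
    next
      case 4
      then show ?thesis
        using succ[of "q - 1"] assms by (auto intro!: exI[of _ "q - 1"])
    qed
  qed
  finally show ?thesis .
qed

lemma edges_cart_prod:
  "edges (cart_prod G B) = {{x, y} | x y.
     (fst x = fst y \<and> fst x \<in> verts G \<and> {snd x, snd y} \<in> edges B) \<or>
     (snd x = snd y \<and> snd x \<in> verts B \<and> {fst x, fst y} \<in> edges G)}"
  unfolding cart_prod_def edges_def by fastforce

abbreviation KC :: "nat \<Rightarrow> nat \<Rightarrow> (nat \<times> nat) graph" where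
  "KC p q \<equiv> cart_prod (complete_graph p) (cycle_graph q)"

text \<open>Vertex \<open>(u, v)\<close> is column u of row v: the rows are the copies of \<open>K\<^sub>p\<close>.\<close>

definition kc_adj :: "nat \<Rightarrow> nat \<Rightarrow> nat \<times> nat \<Rightarrow> nat \<times> nat \<Rightarrow> bool" where
  "kc_adj p q x y \<longleftrightarrow> fst x < p \<and> fst y < p \<and> snd x < q \<and> snd y < q \<and>
     ((snd x = snd y \<and> fst x \<noteq> fst y) \<or>
      (fst x = fst y \<and> (snd y = Suc (snd x) \<or> snd x = Suc (snd y) \<or>
         (snd x = 0 \<and> snd y = q - 1) \<or> (snd y = 0 \<and> snd x = q - 1))))"

lemma kc_adj_sym: "kc_adj p q x y \<Longrightarrow> kc_adj p q y x"
  unfolding kc_adj_def by auto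

lemma kc_adj_irrefl: "3 \<le> q \<Longrightarrow> \<not> kc_adj p q x x"
  unfolding kc_adj_def by auto

lemma verts_KC: "verts (KC p q) = {..<p} \<times> {..<q}"
  unfolding cart_prod_def verts_def[of "(_, _)"] by simp

lemma edges_KC:
  assumes "3 \<le> q"
  shows "edges (KC p q) = {{x, y} | x y. kc_adj p q x y}"
proof -
  have "(fst x = fst y \<and> fst x \<in> verts (complete_graph p) \<and> {snd x, snd y} \<in> edges (cycle_graph q)) \<or>
        (snd x = snd y \<and> snd x \<in> verts (cycle_graph q) \<and> {fst x, fst y} \<in> edges (complete_graph p))
        \<longleftrightarrow> kc_adj p q x y" for x y
    unfolding edge_cycle_graph_iff[OF assms] edge_complete_graph_iff kc_adj_def by auto
  then show ?thesis
    unfolding edges_cart_prod by simp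
qed

lemma edge_KC_at:
  assumes q: "3 \<le> q" and e: "e \<in> edges (KC p q)" and x: "x \<in> e"
  obtains y where "e = {x, y}" "kc_adj p q x y"
proof -
  obtain a b where ab: "e = {a, b}" "kc_adj p q a b"
    using e unfolding edges_KC[OF q] by auto
  show ?thesis
  proof (cases "x = a")
    case True
    then show ?thesis
      using that ab by blast
  next
    case False
    then have "x = b"
      using x ab by blast
    then show ?thesis
      using that[of a] ab kc_adj_sym by (simp add: insert_commute)
  qed
qed

lemma simple_graph_KC: "3 \<le> q \<Longrightarrow> simple_graph (KC p q)"
  unfolding simple_graph_def edges_KC verts_KC
  by (auto simp: kc_adj_irrefl) (auto simp: kc_adj_def)

lemma neighbours_KC:
  assumes "3 \<le> q" "u < p" "v < q"
  shows "{y. kc_adj p q (u, v) y} = (\<lambda>u'. (u', v)) ` ({..<p} - {u}) \<union>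
           {(u, if v = q - 1 then 0 else Suc v), (u, if v = 0 then q - 1 else v - 1)}"
  using assms unfolding kc_adj_def by (auto split: if_splits)

lemma degree_KC:
  assumes q: "3 \<le> q" and x: "x \<in> verts (KC p q)"
  shows "degree (KC p q) x = p + 1"
proof -
  obtain u v where uv: "x = (u, v)" "u < p" "v < q"
    using x unfolding verts_KC by auto
  have incident: "{e \<in> edges (KC p q). x \<in> e} = (\<lambda>y. {x, y}) ` {y. kc_adj p q x y}"
  proof (intro set_eqI iffI)
    fix e assume "e \<in> {e \<in> edges (KC p q). x \<in> e}"
    then show "e \<in> (\<lambda>y. {x, y}) ` {y. kc_adj p q x y}"
      by (auto elim!: edge_KC_at[OF q])
  qed (unfold edges_KC[OF q], blast)
  have inj: "inj_on (\<lambda>y. {x, y}) {y. kc_adj p q x y}"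
    using kc_adj_irrefl[OF q] unfolding inj_on_def by (auto simp: doubleton_eq_iff)
  have "(if v = q - 1 then 0 else Suc v) \<noteq> (if v = 0 then q - 1 else v - 1)"
    using q uv by auto
  then have "card {y. kc_adj p q x y} = p + 1"
    unfolding uv(1) neighbours_KC[OF q uv(2,3)] using uv
    by (subst card_Un_disjoint) (auto simp: card_image inj_on_def)
  then show ?thesis
    unfolding degree_def incident by (simp add: card_image[OF inj])
qed

lemma max_degree_KC:
  assumes "3 \<le> q" "1 \<le> p"
  shows "max_degree (KC p q) = p + 1"
proof -
  have "(0, 0) \<in> verts (KC p q)"
    using assms unfolding verts_KC by simp
  then have "degree (KC p q) ` verts (KC p q) = {p + 1}"
    using degree_KC[OF assms(1)] by (auto intro!: image_eqI)
  then show ?thesis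
    unfolding max_degree_def by simp
qed

lemma matching_book_embedding_KC_pages_ge:
  assumes p: "3 \<le> p" and q: "3 \<le> q" and mbe: "matching_book_embedding (KC p q) k ord page"
  shows "p + 2 \<le> k"
proof -
  have "kc_adj p q (0, 0) (1, 0)" "kc_adj p q (1, 0) (2, 0)" "kc_adj p q (0, 0) (2, 0)"
    using p q unfolding kc_adj_def by auto
  then have "{(0, 0), (1, 0)} \<in> edges (KC p q)" "{(1, 0), (2, 0)} \<in> edges (KC p q)"
    "{(0, 0), (2, 0)} \<in> edges (KC p q)"
    unfolding edges_KC[OF q] by blast+
  then obtain v where "v \<in> verts (KC p q)" "degree (KC p q) v < k"
    using matching_book_embedding_triangle_degree_less[OF simple_graph_KC[OF q] mbe] by blast
  then show ?thesis
    using degree_KC[OF q] by simp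
qed

section \<open>A matching book embedding with \<open>p + 2\<close> pages\<close>

lemma mod_neq_of_less_less_add:
  fixes a b n :: nat
  assumes "a < b" "b < a + n"
  shows "a mod n \<noteq> b mod n"
proof
  assume "a mod n = b mod n"
  then have "n dvd b - a"
    using mod_eq_dvd_iff_nat[of a b n] assms(1) by auto
  moreover have "0 < b - a" "b - a < n"
    using assms by auto
  ultimately show False
    using nat_dvd_not_less by blast
qed

definition snake_col :: "nat \<Rightarrow> nat \<Rightarrow> nat \<Rightarrow> nat" where
  "snake_col p v u = (if even v then u else p - 1 - u)"

definition snake_order :: "nat \<Rightarrow> nat \<times> nat \<Rightarrow> nat" where
  "snake_order p x = snd x * p + snake_col p (snd x) (fst x)"

lemma snake_col_less: "u < p \<Longrightarrow> snake_col p v u < p"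
  unfolding snake_col_def by auto

lemma snake_col_less_iff:
  "u < p \<Longrightarrow> u' < p \<Longrightarrow> snake_col p v u < snake_col p v u' \<longleftrightarrow> (if even v then u < u' else u' < u)"
  unfolding snake_col_def by auto

lemma mult_add_less_mult_add_iff:
  fixes a b v w p :: nat
  assumes "a < p" "b < p"
  shows "v * p + a < w * p + b \<longleftrightarrow> v < w \<or> (v = w \<and> a < b)"
proof -
  have step: "v * p + a < w * p" if "v < w" "a < p" for v w a
  proof -
    have "Suc v * p \<le> w * p"
      using that by (intro mult_le_mono1) simp
    then show ?thesis
      using that by simp
  qed
  show ?thesis
    using assms step[of v w a] step[of w v b] by (cases v w rule: linorder_cases) auto
qed

lemma snake_order_less_iff:
  assumes "u < p" "u' < p"
  shows "snake_order p (u, v) < snake_order p (u', v') \<longleftrightarrow>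
    v < v' \<or> (v = v' \<and> snake_col p v u < snake_col p v u')"
  unfolding snake_order_def using mult_add_less_mult_add_iff[OF snake_col_less snake_col_less] assms by auto

lemma inj_on_snake_order: "inj_on (snake_order p) ({..<p} \<times> UNIV)"
proof (rule inj_onI)
  fix x y assume xy: "x \<in> {..<p} \<times> UNIV" "y \<in> {..<p} \<times> UNIV" "snake_order p x = snake_order p y"
  then obtain u v u' v' where "x = (u, v)" "y = (u', v')" "u < p" "u' < p"
    by auto
  with xy show "x = y"
    using snake_order_less_iff[of u p u' v v'] snake_order_less_iff[of u' p u v' v]
    by (auto simp: snake_col_less_iff split: if_splits)
qed

text \<open>
  Inner rows use the residue classes modulo p. The end rows use classes modulo p + 1; at
  column u the class u is unused and is left to the wrap edge. For odd q the rungs below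
  the last row lie on page p, so the last row moves its class p to page p + 1.
\<close>

definition row_page :: "nat \<Rightarrow> nat \<Rightarrow> nat \<Rightarrow> nat \<Rightarrow> nat \<Rightarrow> nat" where
  "row_page p q v a b =
    (if v = 0 \<or> v = q - 1 then
       (if v = q - 1 \<and> odd q \<and> (a + b + 1) mod Suc p = p then Suc p else (a + b + 1) mod Suc p)
     else (a + b) mod p)"

definition edge_page :: "nat \<Rightarrow> nat \<Rightarrow> nat \<times> nat \<Rightarrow> nat \<times> nat \<Rightarrow> nat" where
  "edge_page p q x y =
    (if snd x = snd y then row_page p q (snd x) (fst x) (fst y)
     else if snd y = Suc (snd x) \<or> snd x = Suc (snd y) then Suc p - min (snd x) (snd y) mod 2
     else min (fst x) (fst y))"

lemma row_page_commute: "row_page p q v a b = row_page p q v b a"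
  unfolding row_page_def by (simp add: add.commute)

lemma edge_page_commute: "edge_page p q x y = edge_page p q y x"
  unfolding edge_page_def by (auto simp: row_page_commute min.commute)

lemma edge_page_row [simp]: "edge_page p q (a, v) (b, v) = row_page p q v a b"
  unfolding edge_page_def by simp

lemma edge_page_rung [simp]: "edge_page p q (a, v) (b, Suc v) = Suc p - v mod 2"
  unfolding edge_page_def by simp

lemma edge_page_wrap:
  assumes "3 \<le> q"
  shows "edge_page p q (a, 0) (b, q - 1) = min a b"
proof -
  have "q - 1 \<noteq> 0" "q - 1 \<noteq> Suc 0"
    using assms by arith+
  then show ?thesis
    unfolding edge_page_def by simp
qed

lemma mod_Suc_neq_Suc: "n mod Suc p \<noteq> Suc p" "Suc p \<noteq> n mod Suc p"
  by (metis less_irrefl mod_less_divisor zero_less_Suc)+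

lemma end_row_page_eq:
  assumes "v = 0 \<or> v = q - 1" "row_page p q v a b = row_page p q v c d"
  shows "(a + b + 1) mod Suc p = (c + d + 1) mod Suc p"
  using assms mod_Suc_neq_Suc unfolding row_page_def by (auto split: if_splits)

lemma row_page_inj:
  assumes "u < p" "w < p" "w' < p" "row_page p q v u w = row_page p q v u w'"
  shows "w = w'"
proof (rule ccontr)
  assume "w \<noteq> w'"
  have "(u + w + k) mod n \<noteq> (u + w' + k) mod n" if "p \<le> n" for k n
    using mod_neq_of_less_less_add[of "u + w + k" "u + w' + k" n]
      mod_neq_of_less_less_add[of "u + w' + k" "u + w + k" n] \<open>w \<noteq> w'\<close> assms(2,3) that
    by (cases "w < w'") auto
  from this[of p 0] this[of "Suc p" 1] show False
    using assms(4) end_row_page_eq[OF _ assms(4)] unfolding row_page_def by (auto split: if_splits)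
qed

lemma row_page_interleaved_neq:
  assumes "a < c" "c < b" "b < d" "d < p"
  shows "row_page p q v a b \<noteq> row_page p q v c d"
proof
  assume eq: "row_page p q v a b = row_page p q v c d"
  have "(a + b + k) mod n \<noteq> (c + d + k) mod n" if "p \<le> n" for k n
    using mod_neq_of_less_less_add[of "a + b + k" "c + d + k" n] assms that by simp
  from this[of p 0] this[of "Suc p" 1] show False
    using eq end_row_page_eq[OF _ eq] unfolding row_page_def by (auto split: if_splits)
qed

lemma end_row_page_neq_between:
  assumes "v = 0 \<or> v = q - 1" "a < p" "b < p" "min a b \<le> c" "c \<le> max a b"
  shows "row_page p q v a b \<noteq> c"
proof -
  have "c mod Suc p \<noteq> (a + b + 1) mod Suc p"
    using mod_neq_of_less_less_add[of c "a + b + 1" "Suc p"] assms(2-5) by auto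
  then show ?thesis
    using assms unfolding row_page_def by auto
qed

lemma row_page_less_rung_page:
  assumes "0 < p" "Suc v < q"
  shows "row_page p q v a b < Suc p - v mod 2"
proof (cases "v = 0")
  case True
  then show ?thesis
    using assms unfolding row_page_def by (simp add: less_Suc_eq_le)
next
  case False
  then have "row_page p q v a b = (a + b) mod p"
    using assms unfolding row_page_def by simp
  moreover have "(a + b) mod p < p" "p \<le> Suc p - v mod 2"
    using assms(1) by (simp, presburger)
  ultimately show ?thesis
    by linarith
qed

lemma row_page_neq_rung_page_below:
  assumes "0 < p" "Suc v < q"
  shows "row_page p q (Suc v) a b \<noteq> Suc p - v mod 2"
proof (cases "Suc v = q - 1")
  case True
  then have "odd q \<longleftrightarrow> v mod 2 = 1"
    using assms by (auto simp: odd_iff_mod_2_eq_one) presburger+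
  then show ?thesis
    using True mod_Suc_neq_Suc unfolding row_page_def
    by (auto simp: mod2_eq_if split: if_splits)
next
  case False
  then have "row_page p q (Suc v) a b = (a + b) mod p"
    using assms unfolding row_page_def by simp
  moreover have "(a + b) mod p < p" "p \<le> Suc p - v mod 2"
    using assms(1) by (simp, presburger)
  ultimately show ?thesis
    by linarith
qed

lemma kc_adj_cases_le:
  assumes "kc_adj p q (ua, va) (ub, vb)" "va \<le> vb"
  obtains (row) "vb = va" | (rung) "ub = ua" "vb = Suc va" | (wrap) "ub = ua" "va = 0" "vb = q - 1"
  using assms unfolding kc_adj_def by auto

lemma row_edge_no_crossing:
  assumes q: "3 \<le> q" and p: "0 < p" and cd: "kc_adj p q (uc, vc) (ud, vd)" and uab: "ua < p" "ub < p"
    and page: "row_page p q v ua ub = edge_page p q (uc, vc) (ud, vd)"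
    and ord: "snake_order p (ua, v) < snake_order p (uc, vc)"
      "snake_order p (uc, vc) < snake_order p (ub, v)" "snake_order p (ub, v) < snake_order p (ud, vd)"
  shows False
proof -
  have ucd: "uc < p" "ud < p" "vd < q"
    using cd unfolding kc_adj_def by auto
  have vc: "vc = v" and col: "snake_col p v ua < snake_col p v uc" "snake_col p v uc < snake_col p v ub"
    using ord(1,2) uab ucd by (auto simp: snake_order_less_iff)
  have "v \<le> vd" and col_d: "vd = v \<Longrightarrow> snake_col p v ub < snake_col p v ud"
    using ord(3) uab ucd by (auto simp: snake_order_less_iff)
  with cd show False
    unfolding vc
  proof (cases rule: kc_adj_cases_le)
    case row
    then have "ua < uc \<and> uc < ub \<and> ub < ud \<or> ud < ub \<and> ub < uc \<and> uc < ua"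
      using col col_d uab ucd by (auto simp: snake_col_less_iff split: if_splits)
    moreover have "row_page p q v ua ub = row_page p q v uc ud"
      using page row vc by simp
    ultimately show False
      using row_page_interleaved_neq[of ua uc ub ud p q v] row_page_interleaved_neq[of ud ub uc ua p q v]
        uab ucd by (auto simp: row_page_commute)
  next
    case rung
    then show False
      using page vc row_page_less_rung_page[OF p, of v q ua ub] ucd by simp
  next
    case wrap
    then have "ua < uc" "uc < ub"
      using col uab ucd by (simp_all add: snake_col_def)
    then show False
      using page wrap vc end_row_page_neq_between[of v q ua p ub uc] uab edge_page_wrap[OF q, of p uc uc]
      by simp
  qed
qed

lemma rung_edge_no_crossing:
  assumes q: "3 \<le> q" and p: "0 < p" and cd: "kc_adj p q (uc, vc) (ud, vd)" and u: "u < p" "Suc va < q"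
    and page: "Suc p - va mod 2 = edge_page p q (uc, vc) (ud, vd)"
    and ord: "snake_order p (u, va) < snake_order p (uc, vc)"
      "snake_order p (uc, vc) < snake_order p (u, Suc va)" "snake_order p (u, Suc va) < snake_order p (ud, vd)"
  shows False
proof -
  have ucd: "uc < p" "ud < p"
    using cd unfolding kc_adj_def by auto
  have vc: "va \<le> vc" "vc \<le> Suc va" and "Suc va \<le> vd"
    using ord u ucd by (auto simp: snake_order_less_iff)
  then have "vc \<le> vd"
    by simp
  with cd show False
  proof (cases rule: kc_adj_cases_le)
    case row
    then show False
      using page vc \<open>Suc va \<le> vd\<close> row_page_neq_rung_page_below[OF p u(2), of uc ud] by simp
  next
    case rung
    have "vc = va \<or> vc = Suc va"
      using vc by auto
    then have "vc = va"
      using page rung by (cases "even va") (auto simp: mod2_eq_if)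
    then show False
      using ord(1,3) rung u ucd by (auto simp: snake_order_less_iff snake_col_less_iff split: if_splits)
  next
    case wrap
    then show False
      using page ucd edge_page_wrap[OF q, of p uc uc] by simp
  qed
qed

lemma wrap_edge_no_crossing:
  assumes q: "3 \<le> q" and cd: "kc_adj p q (uc, vc) (ud, vd)" and u: "u < p"
    and page: "u = edge_page p q (uc, vc) (ud, vd)"
    and ord: "snake_order p (u, 0) < snake_order p (uc, vc)"
      "snake_order p (uc, vc) < snake_order p (u, q - 1)" "snake_order p (u, q - 1) < snake_order p (ud, vd)"
  shows False
proof -
  have ucd: "uc < p" "ud < p" "vc < q" "vd < q"
    using cd unfolding kc_adj_def by auto
  then have vd: "vd = q - 1" and col_d: "snake_col p (q - 1) u < snake_col p (q - 1) ud"
    using ord(3) u by (auto simp: snake_order_less_iff)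
  then have "vc \<le> vd"
    using ucd by simp
  with cd show False
  proof (cases rule: kc_adj_cases_le)
    case row
    then have "snake_col p (q - 1) uc < snake_col p (q - 1) u"
      using ord(2) vd u ucd by (simp add: snake_order_less_iff)
    then have "min uc ud \<le> u" "u \<le> max uc ud"
      using col_d u ucd by (auto simp: snake_col_less_iff split: if_splits)
    then show False
      using page row vd end_row_page_neq_between[of "q - 1" q uc p ud u] ucd by simp
  next
    case rung
    then show False
      using page u by simp
  next
    case wrap
    then show False
      using page ord(1) edge_page_wrap[OF q, of p uc uc] by simp
  qed
qed

lemma edge_page_no_crossing:
  assumes q: "3 \<le> q" and p: "0 < p" and ab: "kc_adj p q a b" and cd: "kc_adj p q c d"
    and page: "edge_page p q a b = edge_page p q c d"
    and ord: "snake_order p a < snake_order p c" "snake_order p c < snake_order p b"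
      "snake_order p b < snake_order p d"
  shows False
proof -
  obtain ua va ub vb uc vc where a: "a = (ua, va)" and b: "b = (ub, vb)" and c: "c = (uc, vc)"
    by (metis prod.collapse)
  have u: "ua < p" "ub < p" "vb < q" "uc < p"
    using ab cd unfolding a b c kc_adj_def by auto
  then have "va \<le> vc" "vc \<le> vb"
    using ord(1,2) unfolding a b c by (auto simp: snake_order_less_iff)
  then have "va \<le> vb"
    by simp
  with ab show False
    unfolding a b
  proof (cases rule: kc_adj_cases_le)
    case row
    then show False
      using row_edge_no_crossing[OF q p] cd page ord u unfolding a b by (metis edge_page_row prod.collapse)
  next
    case rung
    then show False
      using rung_edge_no_crossing[OF q p] cd page ord u unfolding a b by (metis edge_page_rung prod.collapse)
  next
    case wrap
    then show False
      using wrap_edge_no_crossing[OF q] cd page ord u unfolding a b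
      by (metis edge_page_wrap[OF q] min.idem prod.collapse)
  qed
qed

lemma kc_adj_cases:
  assumes "kc_adj p q (u, v) (w, x)"
  obtains (row) "x = v" "w < p" | (column) "w = u" "x \<noteq> v"
  using assms unfolding kc_adj_def by auto

lemma column_edge_page:
  assumes "3 \<le> q" "kc_adj p q (u, v) (u, x)"
  shows "edge_page p q (u, v) (u, x) =
    (if x = Suc v then Suc p - v mod 2 else if v = Suc x then Suc p - x mod 2 else u)"
  using assms unfolding edge_page_def kc_adj_def by auto

lemma column_edge_page_inj:
  assumes q: "3 \<le> q" and x: "kc_adj p q (u, v) (u, x)" and x': "kc_adj p q (u, v) (u, x')"
    and page: "edge_page p q (u, v) (u, x) = edge_page p q (u, v) (u, x')"
  shows "x = x'"
proof -
  have "u < p"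
    using x unfolding kc_adj_def by simp
  then show ?thesis
    using page x x' q unfolding column_edge_page[OF q x] column_edge_page[OF q x'] kc_adj_def
    by (auto simp: mod2_eq_if split: if_splits)
qed

lemma row_page_neq_column_edge_page:
  assumes q: "3 \<le> q" and p: "0 < p" and x: "kc_adj p q (u, v) (u, x)" and w: "w < p"
  shows "row_page p q v u w \<noteq> edge_page p q (u, v) (u, x)"
proof -
  have uv: "u < p" "v < q" "x < q" "x \<noteq> v"
    using x q unfolding kc_adj_def by auto
  consider "x = Suc v" | "v = Suc x" | "x \<noteq> Suc v" "v \<noteq> Suc x" "v = 0 \<or> v = q - 1"
    using x q unfolding kc_adj_def by auto
  then show ?thesis
  proof cases
    case 1
    then show ?thesis
      using row_page_less_rung_page[OF p, of v q u w] uv column_edge_page[OF q x] by simp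
  next
    case 2
    then show ?thesis
      using row_page_neq_rung_page_below[OF p, of x q u w] uv column_edge_page[OF q x] by simp
  next
    case 3
    then show ?thesis
      using end_row_page_neq_between[of v q u p w u] uv w column_edge_page[OF q x] by simp
  qed
qed

lemma edge_page_inj_at_vertex:
  assumes q: "3 \<le> q" and p: "0 < p" and y: "kc_adj p q x y" and z: "kc_adj p q x z"
    and page: "edge_page p q x y = edge_page p q x z"
  shows "y = z"
proof -
  obtain u v w1 x1 w2 x2 where xyz: "x = (u, v)" "y = (w1, x1)" "z = (w2, x2)"
    by (metis prod.collapse)
  have u: "u < p"
    using y unfolding xyz kc_adj_def by simp
  from y[unfolded xyz] have "(w1, x1) = (w2, x2)"
  proof (cases rule: kc_adj_cases)
    case row1: row
    from z[unfolded xyz] show ?thesis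
    proof (cases rule: kc_adj_cases)
      case row
      then show ?thesis
        using row1 page row_page_inj[OF u] unfolding xyz by simp
    next
      case column
      then show ?thesis
        using row1 page z row_page_neq_column_edge_page[OF q p] unfolding xyz by simp
    qed
  next
    case column1: column
    from z[unfolded xyz] show ?thesis
    proof (cases rule: kc_adj_cases)
      case row
      then show ?thesis
        using column1 page y row_page_neq_column_edge_page[OF q p] unfolding xyz by (metis edge_page_row)
    next
      case column
      then show ?thesis
        using column1 page y z column_edge_page_inj[OF q] unfolding xyz by simp
    qed
  qed
  then show ?thesis
    unfolding xyz .
qed

definition edge_fun :: "('a \<Rightarrow> 'a \<Rightarrow> 'b) \<Rightarrow> 'a set \<Rightarrow> 'b" where
  "edge_fun f e = f (fst (SOME ab. e = {fst ab, snd ab})) (snd (SOME ab. e = {fst ab, snd ab}))"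

lemma edge_fun_doubleton:
  assumes "\<And>x y. f x y = f y x"
  shows "edge_fun f {a, b} = f a b"
proof -
  define ab where "ab = (SOME ab. {a, b} = {fst ab, snd ab})"
  have "{a, b} = {fst ab, snd ab}"
    unfolding ab_def by (rule someI[of _ "(a, b)"]) simp
  then have "f (fst ab) (snd ab) = f a b"
    using assms by (auto simp: doubleton_eq_iff)
  then show ?thesis
    unfolding edge_fun_def ab_def .
qed

lemma edge_page_le:
  assumes "0 < p" "fst x < p"
  shows "edge_page p q x y \<le> Suc p"
proof -
  have "row_page p q v a b \<le> Suc p" for v a b
    using assms(1) mod_le_divisor[OF assms(1)] mod_Suc_le_divisor
    unfolding row_page_def by (simp add: le_SucI)
  moreover have "min (fst x) (fst y) \<le> Suc p"
    using assms(2) by linarith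
  ultimately show ?thesis
    unfolding edge_page_def by simp
qed

lemma edge_fun_edge_page [simp]: "edge_fun (edge_page p q) {a, b} = edge_page p q a b"
  using edge_fun_doubleton edge_page_commute by metis

lemma same_page_no_crossing_KC:
  assumes q: "3 \<le> q" and p: "0 < p" and ef: "e \<in> edges (KC p q)" "f \<in> edges (KC p q)"
    and same: "edge_fun (edge_page p q) e = edge_fun (edge_page p q) f"
  shows "\<not> crossing (snake_order p) e f"
proof
  assume "crossing (snake_order p) e f"
  then obtain a b c d where e: "e = {a, b}" and f: "f = {c, d}" and ord: "snake_order p a < snake_order p c"
    "snake_order p c < snake_order p b" "snake_order p b < snake_order p d"
    unfolding crossing_def by blast
  obtain b' where "e = {a, b'}" "kc_adj p q a b'"
    using edge_KC_at[OF q ef(1)] e by blast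
  moreover obtain d' where "f = {c, d'}" "kc_adj p q c d'"
    using edge_KC_at[OF q ef(2)] f by blast
  ultimately have "kc_adj p q a b" "kc_adj p q c d"
    using e f ord by (auto simp: doubleton_eq_iff)
  then show False
    using edge_page_no_crossing[OF q p _ _ _ ord] same e f by simp
qed

lemma same_page_disjoint_KC:
  assumes q: "3 \<le> q" and p: "0 < p" and ef: "e \<in> edges (KC p q)" "f \<in> edges (KC p q)"
    and same: "edge_fun (edge_page p q) e = edge_fun (edge_page p q) f" and "e \<noteq> f"
  shows "e \<inter> f = {}"
proof (rule ccontr)
  assume "e \<inter> f \<noteq> {}"
  then obtain x where "x \<in> e" "x \<in> f"
    by blast
  obtain y where y: "e = {x, y}" "kc_adj p q x y"
    using edge_KC_at[OF q ef(1) \<open>x \<in> e\<close>] by blast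
  obtain z where z: "f = {x, z}" "kc_adj p q x z"
    using edge_KC_at[OF q ef(2) \<open>x \<in> f\<close>] by blast
  have "y = z"
    using edge_page_inj_at_vertex[OF q p y(2) z(2)] same y z by simp
  then show False
    using \<open>e \<noteq> f\<close> y z by simp
qed

theorem matching_book_embedding_KC:
  assumes p: "0 < p" and q: "3 \<le> q"
  shows "matching_book_embedding (KC p q) (p + 2) (snake_order p) (edge_fun (edge_page p q))"
proof -
  have "inj_on (snake_order p) (verts (KC p q))"
    using inj_on_snake_order by (rule inj_on_subset) (auto simp: verts_KC)
  moreover have "edge_fun (edge_page p q) e < p + 2" if e: "e \<in> edges (KC p q)" for e
  proof -
    obtain a b where "e = {a, b}" "kc_adj p q a b"
      using e unfolding edges_KC[OF q] by blast
    moreover from this have "fst a < p"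
      unfolding kc_adj_def by simp
    ultimately show ?thesis
      using edge_page_le[OF p] by (simp add: less_Suc_eq_le)
  qed
  ultimately show ?thesis
    unfolding matching_book_embedding_def
    using same_page_no_crossing_KC[OF q p] same_page_disjoint_KC[OF q p] by blast
qed

theorem mainTheorem1:
  fixes p q :: nat
  assumes "p \<ge> 3" and "q \<ge> 3"
  shows "mbt (cart_prod (complete_graph p) (cycle_graph q))
           = max_degree (cart_prod (complete_graph p) (cycle_graph q)) + 1"
proof -
  have p: "0 < p" "1 \<le> p"
    using assms(1) by simp_all
  have "mbt (KC p q) = p + 2"
    unfolding mbt_def
  proof (rule Least_equality)
    show "\<exists>ord page. matching_book_embedding (KC p q) (p + 2) ord page"
      using matching_book_embedding_KC[OF p(1) assms(2)] by blast
  next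
    fix k
    assume "\<exists>ord page. matching_book_embedding (KC p q) k ord page"
    then show "p + 2 \<le> k"
      using matching_book_embedding_KC_pages_ge[OF assms(1,2)] by blast
  qed
  moreover have "max_degree (KC p q) = p + 1"
    by (rule max_degree_KC[OF assms(2) p(2)])
  ultimately show ?thesis
    by simp
qed

end
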